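(* Let $r\ge1$, $\mu\in\mathcal P_r$ and $1\le s\le r$. For every $n\in\mathbb N$ let $\mathbf x_n\in\Xi_n$ minimize $\mathbf y\mapsto d_s(\delta^{\mathbf u_n}_{\mathbf y},\mu)$ over $\Xi_n$ (a best uniform $s$-approximation). Then $\lim_{n\to\infty}d_r(\delta^{\mathbf u_n}_{\mathbf x_n},\mu)=0$. In particular, $\lim_{n\to\infty}d_r(\delta^{\mathbf u_n}_{\mathbf x_n},\mu)=0$ for $x_{n,i}=F_\mu^{-1}\big(\tfrac{2i-1}{2n}\big)$, $1\le i\le n$.
   Context: $\mathcal P$ denotes the set of Borel probability measures on $\mathbb R$; $\mathcal P_r=\{\mu\in\mathcal P:\int|x|^r{\rm d}\mu(x)<\infty\}$. For $\mu\in\mathcal P$, $F_\mu(x)=\mu(]-\infty,x])$ and $F_\mu^{-1}(t)=\sup\{x: F_\mu(x)\le t\}$, $t\in]0,1[$. $d_r(\mu,\nu)=\big(\int_0^1|F_\mu^{-1}(t)-F_\nu^{-1}(t)|^r{\rm d}t\big)^{1/r}$. $\Xi_n=\{\mathbf x\in\mathbb R^n:x_1\le\dots\le x_n\}$, $\mathbf u_n=(1/n,\dots,1/n)$, $\delta^{\mathbf u_n}_{\mathbf x}=\frac1n\sum_{i=1}^n\delta_{x_i}$. *)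

theory Defs
  imports "HOL-Probability.Probability"
begin

definition cdf_of :: "real measure \<Rightarrow> real \<Rightarrow> real" where
  "cdf_of M x = measure M {..x}"

definition quantile :: "real measure \<Rightarrow> real \<Rightarrow> real" where
  "quantile M t = Sup {x. cdf_of M x \<le> t}"

definition dist_r :: "real \<Rightarrow> real measure \<Rightarrow> real measure \<Rightarrow> real" where
  "dist_r r M N =
     (LINT t:{0<..<1}|lborel. \<bar>quantile M t - quantile N t\<bar> powr r) powr (1 / r)"

definition unif_emp :: "nat \<Rightarrow> (nat \<Rightarrow> real) \<Rightarrow> real measure" where
  "unif_emp n x = measure_pmf (map_pmf x (pmf_of_set {1..n}))"

definition Xi :: "nat \<Rightarrow> (nat \<Rightarrow> real) set" where
  "Xi n = {x. \<forall>i j. 1 \<le> i \<longrightarrow> i \<le> j \<longrightarrow> j \<le> n \<longrightarrow> x i \<le> x j}"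

end

theory Submission
  imports Defs
begin

text \<open>
  Write \<open>Q\<close> for the quantile function of \<open>\<mu>\<close>. On the \<open>i\<close>-th of the \<open>n\<close> cells of \<open>]0,1[\<close> the
  quantile function of \<open>\<delta>\<^sub>x\<close> is the constant \<open>x\<^sub>i\<close>, so \<open>d\<^sub>p(\<delta>\<^sub>x, \<mu>)\<^sup>p\<close> is the sum over the cells of
  the integrals of \<open>|x\<^sub>i - Q|\<^sup>p\<close>. In a best \<open>s\<close>-approximation every \<open>x\<^sub>i\<close> lies between \<open>Q((i-1)/n)\<close>
  and \<open>Q(i/n)\<close>, since otherwise clamping the points towards \<open>Q\<close> would strictly lower the cost. So
  replacing \<open>x\<^sub>i\<close> alone by the midpoint value \<open>c\<^sub>i = Q((2i-1)/(2n))\<close> gives a competitor, and \<open>x\<^sub>i\<close> is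
  at least as good as \<open>c\<^sub>i\<close> in \<open>L\<^sup>s\<close> on its cell; an elementary inequality turns this into a bound of
  the \<open>L\<^sup>r\<close> cost of \<open>x\<^sub>i\<close> by a constant multiple of that of \<open>c\<^sub>i\<close>. Finally the midpoint values
  converge in \<open>L\<^sup>r\<close>: after truncating \<open>Q\<close> at height \<open>K\<close>, the truncated parts increase across the cells
  and contribute at most \<open>(2K)\<^sup>r/n\<close> in total, and the remainder is controlled by the tail
  \<open>\<integral>|Q - clip\<^sub>K Q|\<^sup>r\<close>, which vanishes as \<open>K \<rightarrow> \<infinity>\<close> by dominated convergence.
\<close>

lemma set_integrable_const:
  "A \<in> sets M \<Longrightarrow> emeasure M A < \<infinity> \<Longrightarrow> set_integrable M A (\<lambda>_. c :: real)"
  unfolding set_integrable_def by (intro integrable_scaleR_left integrable_real_indicator)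

lemma set_integral_mono_set:
  fixes f :: "'a \<Rightarrow> real"
  assumes "set_integrable M A f" "B \<in> sets M" "B \<subseteq> A" "\<And>x. x \<in> A \<Longrightarrow> 0 \<le> f x"
  shows "(LINT x:B|M. f x) \<le> (LINT x:A|M. f x)"
  using set_integrable_subset[OF assms(1-3)] assms
  unfolding set_integrable_def set_lebesgue_integral_def
  by (intro integral_mono) (auto split: split_indicator)

lemma emeasure_subset_unit_finite:
  assumes "B \<subseteq> {0<..<1::real}"
  shows "emeasure lborel B < \<infinity>"
proof -
  have "emeasure lborel B \<le> emeasure lborel {0<..<1::real}"
    using assms by (intro emeasure_mono) auto
  then show ?thesis
    by (simp add: le_less_trans)
qed

lemma set_borel_measurable_restrict_space:
  fixes h :: "'a \<Rightarrow> real"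
  assumes "h \<in> borel_measurable (restrict_space M A)" "B \<in> sets M" "B \<subseteq> A"
  shows "set_borel_measurable M B h"
  using measurable_restrict_mono[OF assms(1,3)] assms(2)
  by (simp add: set_borel_measurable_def borel_measurable_restrict_space_iff)

lemma mono_on_measurable_unit:
  fixes Q :: "real \<Rightarrow> real"
  assumes "mono_on {0<..<1} Q"
  shows "Q \<in> borel_measurable (restrict_space lborel {0<..<1})"
proof -
  have "sets (restrict_space lborel {0<..<1::real}) = sets (restrict_space borel {0<..<1})"
    by (simp only: sets_restrict_space sets_lborel)
  then show ?thesis
    unfolding measurable_cong_sets[OF _ refl] using borel_measurable_mono_on_fnc[OF assms] by simp
qed

section \<open>Cells of the unit interval and empirical quantile functions\<close>

text \<open>The first cell is open at \<open>0\<close> so that the cells partition \<open>]0,1[\<close>.\<close>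

definition cell :: "nat \<Rightarrow> nat \<Rightarrow> real set" where
  "cell n i = (if i = 1 then {0<..<1 / real n} else {real (i - 1) / real n ..< real i / real n})"

lemma sets_cell [measurable]: "cell n i \<in> sets borel"
  by (simp add: cell_def)

lemma emeasure_cell_finite: "emeasure lborel (cell n i) < \<infinity>"
proof -
  have "real (i - 1) / real n \<le> real i / real n"
    by (simp add: divide_right_mono)
  then show ?thesis
    by (cases "i = 1") (auto simp: cell_def emeasure_lborel_Ico)
qed

lemma measure_cell: "1 \<le> i \<Longrightarrow> 1 \<le> n \<Longrightarrow> measure lborel (cell n i) = 1 / real n"
  by (cases "i = 1") (auto simp: cell_def of_nat_diff diff_divide_distrib)

lemma set_integrable_cell_const: "set_integrable lborel (cell n i) (\<lambda>t. c :: real)"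
  using emeasure_cell_finite by (intro set_integrable_const) auto

lemma set_integral_cell_const:
  "1 \<le> i \<Longrightarrow> 1 \<le> n \<Longrightarrow> (LINT t:cell n i|lborel. (c :: real)) = c / real n"
  using emeasure_cell_finite[of n i] by (subst set_integral_const) (auto simp: measure_cell)

lemma cell_lower: "1 \<le> i \<Longrightarrow> t \<in> cell n i \<Longrightarrow> real (i - 1) / real n \<le> t"
  by (cases "i = 1") (auto simp: cell_def)

lemma cell_upper: "t \<in> cell n i \<Longrightarrow> t < real i / real n"
  by (cases "i = 1") (auto simp: cell_def)

lemma greaterThanLessThan_subset_cell:
  "1 \<le> i \<Longrightarrow> {real (i - 1) / real n <..< real i / real n} \<subseteq> cell n i"
  by (cases "i = 1") (auto simp: cell_def)

lemma cell_subset_unit: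
  assumes "1 \<le> i" "i \<le> n"
  shows "cell n i \<subseteq> {0<..<1}"
proof
  fix t assume t: "t \<in> cell n i"
  have "0 < t"
  proof (cases "i = 1")
    case False
    with assms have "0 < real (i - 1) / real n" by simp
    with cell_lower[OF assms(1) t] show ?thesis by linarith
  qed (use t in \<open>simp add: cell_def\<close>)
  moreover have "t < 1"
    using cell_upper[OF t] assms by (simp add: divide_le_eq_1 order.strict_trans2)
  ultimately show "t \<in> {0<..<1}" by simp
qed

lemma mem_cell_iff:
  assumes t: "t \<in> {0<..<1}" and "1 \<le> n" "1 \<le> i"
  shows "t \<in> cell n i \<longleftrightarrow> nat \<lfloor>real n * t\<rfloor> + 1 = i"
proof -
  have n: "real n > 0" using assms by simp
  have "t \<in> cell n i \<longleftrightarrow> real (i - 1) \<le> real n * t \<and> real n * t < real i"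
    using t n by (cases "i = 1") (auto simp: cell_def field_simps)
  also have "\<dots> \<longleftrightarrow> \<lfloor>real n * t\<rfloor> = int (i - 1)"
    using assms by (auto simp: floor_eq_iff)
  also have "\<dots> \<longleftrightarrow> nat \<lfloor>real n * t\<rfloor> + 1 = i"
    using assms t by auto
  finally show ?thesis .
qed

lemma cell_index_bounds:
  assumes t: "t \<in> {0<..<1}" and n: "1 \<le> n"
  shows "nat \<lfloor>real n * t\<rfloor> + 1 \<in> {1..n}"
proof -
  have "\<lfloor>real n * t\<rfloor> < int n" "0 \<le> \<lfloor>real n * t\<rfloor>"
    using t n by (simp_all add: floor_less_iff)
  then have "nat \<lfloor>real n * t\<rfloor> < n"
    by (simp add: nat_less_iff)
  then show ?thesis by simp
qed

lemma midpoint_in_cell: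
  assumes "1 \<le> i" "i \<le> n"
  shows "(2 * real i - 1) / (2 * real n) \<in> cell n i"
proof -
  have "(2 * real i - 1) / (2 * real n) \<in> {real (i - 1) / real n <..< real i / real n}"
    using assms by (auto simp: of_nat_diff field_simps)
  then show ?thesis
    using greaterThanLessThan_subset_cell[OF assms(1)] by blast
qed

lemma midpoint_in_unit: "1 \<le> i \<Longrightarrow> i \<le> n \<Longrightarrow> (2 * real i - 1) / (2 * real n) \<in> {0<..<1}"
  using midpoint_in_cell cell_subset_unit by blast

lemma set_integral_unit_eq_sum_cells:
  fixes f :: "nat \<Rightarrow> real \<Rightarrow> real" and g :: "real \<Rightarrow> real"
  assumes n: "1 \<le> n"
    and int: "\<And>i. i \<in> {1..n} \<Longrightarrow> set_integrable lborel (cell n i) (f i)"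
    and g: "\<And>t. t \<in> {0<..<1} \<Longrightarrow> g t = f (nat \<lfloor>real n * t\<rfloor> + 1) t"
  shows "set_integrable lborel {0<..<1} g"
    and "(LINT t:{0<..<1}|lborel. g t) = (\<Sum>i=1..n. LINT t:cell n i|lborel. f i t)"
proof -
  have split: "indicator {0<..<1} t *\<^sub>R g t = (\<Sum>i=1..n. indicator (cell n i) t *\<^sub>R f i t)" for t
  proof (cases "t \<in> {0<..<1}")
    case True
    define k where "k = nat \<lfloor>real n * t\<rfloor> + 1"
    have "(\<Sum>i=1..n. indicator (cell n i) t *\<^sub>R f i t) = (\<Sum>i=1..n. if i = k then f i t else 0)"
      by (intro sum.cong) (auto simp: indicator_def mem_cell_iff[OF True n] k_def)
    then show ?thesis
      using True g cell_index_bounds[OF True n] by (simp add: k_def)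
  next
    case False
    then have "indicator (cell n i) t = (0::real)" if "i \<in> {1..n}" for i
      using cell_subset_unit[of i n] that by (auto simp: indicator_def)
    then show ?thesis
      using False by simp
  qed
  have cells: "integrable lborel (\<lambda>t. indicator (cell n i) t *\<^sub>R f i t)" if "i \<in> {1..n}" for i
    using int[OF that] unfolding set_integrable_def .
  show "set_integrable lborel {0<..<1} g"
    unfolding set_integrable_def split using cells by (intro Bochner_Integration.integrable_sum)
  show "(LINT t:{0<..<1}|lborel. g t) = (\<Sum>i=1..n. LINT t:cell n i|lborel. f i t)"
    unfolding set_lebesgue_integral_def split using cells by (intro Bochner_Integration.integral_sum)
qed

lemma cdf_unif_emp:
  assumes "1 \<le> n"
  shows "cdf_of (unif_emp n v) y = real (card {i\<in>{1..n}. v i \<le> y}) / real n"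
proof -
  have "cdf_of (unif_emp n v) y = measure (measure_pmf (pmf_of_set {1..n})) (v -` {..y})"
    by (simp add: cdf_of_def unif_emp_def)
  also have "\<dots> = real (card ({1..n} \<inter> v -` {..y})) / real (card {1..n})"
    using assms by (subst measure_pmf_of_set) auto
  also have "{1..n} \<inter> v -` {..y} = {i\<in>{1..n}. v i \<le> y}"
    by auto
  finally show ?thesis by simp
qed

lemma XiD: "v \<in> Xi n \<Longrightarrow> 1 \<le> i \<Longrightarrow> i \<le> j \<Longrightarrow> j \<le> n \<Longrightarrow> v i \<le> v j"
  by (simp add: Xi_def)

lemma card_le_iff_less_Xi:
  assumes v: "v \<in> Xi n" and k: "k < n"
  shows "card {i\<in>{1..n}. v i \<le> y} \<le> k \<longleftrightarrow> y < v (k + 1)"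
proof
  assume card: "card {i\<in>{1..n}. v i \<le> y} \<le> k"
  show "y < v (k + 1)"
  proof (rule ccontr)
    assume "\<not> y < v (k + 1)"
    then have "{1..k + 1} \<subseteq> {i\<in>{1..n}. v i \<le> y}"
      using XiD[OF v] k by fastforce
    then have "k + 1 \<le> card {i\<in>{1..n}. v i \<le> y}"
      using card_mono[of _ "{1..k + 1}"] by fastforce
    with card show False by simp
  qed
next
  assume y: "y < v (k + 1)"
  have "{i\<in>{1..n}. v i \<le> y} \<subseteq> {1..k}"
  proof
    fix i assume i: "i \<in> {i\<in>{1..n}. v i \<le> y}"
    with y XiD[OF v, of "k + 1" i] show "i \<in> {1..k}"
      by (cases "i \<le> k") auto
  qed
  then show "card {i\<in>{1..n}. v i \<le> y} \<le> k"
    using card_mono[of "{1..k}"] by fastforce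
qed

lemma quantile_unif_emp:
  assumes n: "1 \<le> n" and v: "v \<in> Xi n" and t: "t \<in> {0<..<1}"
  shows "quantile (unif_emp n v) t = v (nat \<lfloor>real n * t\<rfloor> + 1)"
proof -
  define k where "k = nat \<lfloor>real n * t\<rfloor>"
  have k: "k < n"
    using cell_index_bounds[OF t n] by (simp add: k_def)
  have "cdf_of (unif_emp n v) y \<le> t \<longleftrightarrow> y < v (k + 1)" for y
  proof -
    have "cdf_of (unif_emp n v) y \<le> t \<longleftrightarrow> real (card {i\<in>{1..n}. v i \<le> y}) \<le> real n * t"
      using n by (simp add: cdf_unif_emp divide_le_eq mult.commute)
    also have "\<dots> \<longleftrightarrow> card {i\<in>{1..n}. v i \<le> y} \<le> k"
      using t by (simp add: k_def le_nat_iff le_floor_iff)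
    also have "\<dots> \<longleftrightarrow> y < v (k + 1)"
      by (rule card_le_iff_less_Xi[OF v k])
    finally show ?thesis .
  qed
  then have "{y. cdf_of (unif_emp n v) y \<le> t} = {..< v (k + 1)}"
    by auto
  then show ?thesis
    by (simp add: quantile_def k_def)
qed

lemma mono_on_quantile:
  assumes "real_distribution M"
  shows "mono_on {0<..<1} (quantile M)"
proof (rule mono_onI)
  interpret real_distribution M by (rule assms)
  have cdf: "cdf_of M = cdf M"
    by (simp add: fun_eq_iff cdf_of_def cdf_def)
  fix t u :: real assume t: "t \<in> {0<..<1}" and u: "u \<in> {0<..<1}" and "t \<le> u"
  have "\<forall>\<^sub>F x in at_bot. cdf M x < t"
    using order_tendstoD(2)[OF cdf_lim_at_bot] t by simp
  then obtain A where "cdf M A < t"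
    by (auto simp: eventually_at_bot_linorder)
  then have "{x. cdf_of M x \<le> t} \<noteq> {}"
    unfolding cdf by (auto intro!: exI[of _ A])
  moreover have "\<forall>\<^sub>F x in at_top. u < cdf M x"
    using order_tendstoD(1)[OF cdf_lim_at_top_prob] u by simp
  then obtain B where B: "\<And>x. B \<le> x \<Longrightarrow> u < cdf M x"
    by (auto simp: eventually_at_top_linorder)
  have "bdd_above {x. cdf_of M x \<le> u}"
  proof (rule bdd_aboveI)
    fix x assume "x \<in> {x. cdf_of M x \<le> u}"
    then show "x \<le> B"
      using B[of x] cdf by force
  qed
  moreover have "{x. cdf_of M x \<le> t} \<subseteq> {x. cdf_of M x \<le> u}"
    using \<open>t \<le> u\<close> by auto
  ultimately show "quantile M t \<le> quantile M u"
    unfolding quantile_def by (rule cSup_subset_mono)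
qed

lemma Xi_min_prefix:
  assumes "x \<in> Xi n"
  shows "(\<lambda>k. if k \<le> j then min (x k) b else x k) \<in> Xi n"
  unfolding Xi_def
proof (intro CollectI allI impI)
  fix a c :: nat assume "1 \<le> a" "a \<le> c" "c \<le> n"
  with XiD[OF assms] have "x a \<le> x c" by blast
  then show "(if a \<le> j then min (x a) b else x a) \<le> (if c \<le> j then min (x c) b else x c)"
    using \<open>a \<le> c\<close> by auto
qed

lemma Xi_max_suffix:
  assumes "x \<in> Xi n"
  shows "(\<lambda>k. if j \<le> k then max (x k) b else x k) \<in> Xi n"
  unfolding Xi_def
proof (intro CollectI allI impI)
  fix a c :: nat assume "1 \<le> a" "a \<le> c" "c \<le> n"
  with XiD[OF assms] have "x a \<le> x c" by blast
  then show "(if j \<le> a then max (x a) b else x a) \<le> (if j \<le> c then max (x c) b else x c)"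
    using \<open>a \<le> c\<close> by auto
qed

lemma Xi_update:
  assumes x: "x \<in> Xi n"
    and lower: "1 < i \<Longrightarrow> x (i - 1) \<le> c" and upper: "i < n \<Longrightarrow> c \<le> x (i + 1)"
  shows "x(i := c) \<in> Xi n"
  unfolding Xi_def
proof (intro CollectI allI impI)
  fix a b :: nat assume ab: "1 \<le> a" "a \<le> b" "b \<le> n"
  consider "a = i" "b \<noteq> i" | "a \<noteq> i" "b = i" | "a = i \<longleftrightarrow> b = i"
    by blast
  then show "(x(i := c)) a \<le> (x(i := c)) b"
  proof cases
    case 1
    with ab upper XiD[OF x, of "i + 1" b] show ?thesis by simp
  next
    case 2
    with ab have "1 < i" "a \<le> i - 1" by auto
    with ab 2 lower XiD[OF x, of a "i - 1"] show ?thesis by force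
  next
    case 3
    with ab XiD[OF x, of a b] show ?thesis by auto
  qed
qed

lemma Xi_mono_on_midpoints:
  assumes "mono_on {0<..<1} Q"
  shows "(\<lambda>i. Q ((2 * real i - 1) / (2 * real n))) \<in> Xi n"
  unfolding Xi_def using assms
  by (auto intro!: mono_onD[OF assms] midpoint_in_unit divide_right_mono)

lemma powr_le_sum3:
  fixes a b c w p :: real
  assumes p: "0 < p" and w: "0 \<le> w" "w \<le> \<bar>a\<bar> + \<bar>b\<bar> + \<bar>c\<bar>"
  shows "w powr p \<le> 3 powr p * (\<bar>a\<bar> powr p + \<bar>b\<bar> powr p + \<bar>c\<bar> powr p)"
proof -
  define m where "m = max \<bar>a\<bar> (max \<bar>b\<bar> \<bar>c\<bar>)"
  have "w powr p \<le> (3 * m) powr p"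
    using p w by (intro powr_mono2) (auto simp: m_def)
  also have "\<dots> = 3 powr p * m powr p"
    by (simp add: m_def powr_mult)
  also have "m powr p \<le> \<bar>a\<bar> powr p + \<bar>b\<bar> powr p + \<bar>c\<bar> powr p"
    by (auto simp: m_def max_def)
  finally show ?thesis by simp
qed

lemma abs_powr_le_one_plus:
  fixes u p r :: real
  assumes "0 < p" "p \<le> r"
  shows "\<bar>u\<bar> powr p \<le> 1 + \<bar>u\<bar> powr r"
proof (cases "\<bar>u\<bar> \<le> 1")
  case True
  then have "\<bar>u\<bar> powr p \<le> 1"
    using assms by (intro powr_le1) auto
  then show ?thesis by (simp add: add_increasing2)
next
  case False
  then have "\<bar>u\<bar> powr p \<le> \<bar>u\<bar> powr r"
    using assms by (intro powr_mono) auto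
  then show ?thesis by simp
qed

lemma powr_superadditive:
  fixes a b s :: real
  assumes a: "0 \<le> a" and b: "0 \<le> b" and s: "1 \<le> s"
  shows "a powr s + b powr s \<le> (a + b) powr s"
proof -
  have le: "x powr s \<le> (a + b) powr (s - 1) * x" if "0 \<le> x" "x \<le> a + b" for x
  proof (cases "x = 0")
    case False
    then have "x powr s = x powr (s - 1) * x"
      using that by (simp add: powr_diff)
    also have "\<dots> \<le> (a + b) powr (s - 1) * x"
      using that s by (intro mult_right_mono powr_mono2) auto
    finally show ?thesis .
  qed (use s in simp)
  show ?thesis
  proof (cases "a + b = 0")
    case False
    then have "(a + b) powr s = (a + b) powr (s - 1) * (a + b)"
      using a b by (simp add: powr_diff)
    then have "(a + b) powr s = (a + b) powr (s - 1) * a + (a + b) powr (s - 1) * b"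
      by (simp add: distrib_left)
    with le[of a] le[of b] a b show ?thesis by simp
  qed (use a b in \<open>simp add: add_nonneg_eq_0_iff\<close>)
qed

lemma powr_le_powr_minus_one_mult:
  fixes a d l r :: real
  assumes "0 \<le> a" "a \<le> d" "d \<le> l" "1 \<le> r"
  shows "a powr r \<le> l powr (r - 1) * d"
proof (cases "a = 0")
  case False
  then have "a powr r = a powr (r - 1) * a"
    using assms by (simp add: powr_diff)
  also have "\<dots> \<le> l powr (r - 1) * d"
    using assms by (intro mult_mono powr_mono2) auto
  finally show ?thesis .
qed (use assms in simp)

lemma abs_powr_add_diff_lower:
  fixes d y s :: real
  assumes s: "1 \<le> s" and small: "4 * \<bar>y\<bar> < \<bar>d\<bar>"
  shows "((3/4) powr s - (1/4) powr s) * \<bar>d\<bar> powr s \<le> \<bar>y + d\<bar> powr s - \<bar>y\<bar> powr s"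
proof -
  have "3 * \<bar>d\<bar> / 4 \<le> \<bar>y + d\<bar>"
    using small by linarith
  then have "(3 * \<bar>d\<bar> / 4) powr s \<le> \<bar>y + d\<bar> powr s"
    using s by (intro powr_mono2) auto
  moreover have "\<bar>y\<bar> powr s \<le> (\<bar>d\<bar> / 4) powr s"
    using small s by (intro powr_mono2) auto
  ultimately show ?thesis
    by (simp add: powr_mult[symmetric] left_diff_distrib)
qed

definition shift_const :: "real \<Rightarrow> real \<Rightarrow> real" where
  "shift_const r s = 4 powr r + 4 powr (r - s) / ((3/4) powr s - (1/4) powr s)"

lemma shift_const_nonneg: "0 < s \<Longrightarrow> 0 \<le> shift_const r s"
  unfolding shift_const_def by (intro add_nonneg_nonneg divide_nonneg_nonneg) (auto intro: powr_mono2)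

text \<open>
  If moving the centre from \<open>y\<close> by \<open>d\<close> does not decrease \<open>|\<cdot>|\<^sup>s\<close> on average, then \<open>|d|\<^sup>r\<close> is
  controlled by the \<open>r\<close>-th moment alone: either \<open>|y| \<ge> |d|/4\<close>, or \<open>|y + d|\<^sup>s - |y|\<^sup>s\<close> is of
  order \<open>|d|\<^sup>s\<close>.
\<close>

lemma abs_powr_shift_bound:
  fixes d r s :: real
  assumes s: "1 \<le> s" "s \<le> r"
  obtains \<gamma> where "0 \<le> \<gamma>"
    and "\<And>y. \<bar>d\<bar> powr r \<le> \<gamma> * (\<bar>y + d\<bar> powr s - \<bar>y\<bar> powr s) + shift_const r s * \<bar>y\<bar> powr r"
proof -
  define \<delta> where "\<delta> = (3/4) powr s - (1/4::real) powr s"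
  define \<gamma> where "\<gamma> = \<bar>d\<bar> powr (r - s) / \<delta>"
  have \<delta>: "0 < \<delta>" using s by (simp add: \<delta>_def powr_less_mono2)
  have \<beta>: "shift_const r s = 4 powr r + 4 powr (r - s) / \<delta>" and \<beta>_nonneg: "0 \<le> shift_const r s"
    using shift_const_nonneg[of s r] s by (simp_all add: shift_const_def \<delta>_def)
  show ?thesis
  proof (rule that[of \<gamma>])
    show "0 \<le> \<gamma>" using \<delta> by (simp add: \<gamma>_def)
    fix y :: real
    show "\<bar>d\<bar> powr r \<le> \<gamma> * (\<bar>y + d\<bar> powr s - \<bar>y\<bar> powr s) + shift_const r s * \<bar>y\<bar> powr r"
    proof (cases "4 * \<bar>y\<bar> < \<bar>d\<bar>")
      case True
      have "\<bar>d\<bar> powr r = \<gamma> * (\<delta> * \<bar>d\<bar> powr s)"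
        using \<delta> True by (simp add: \<gamma>_def powr_add[symmetric])
      also have "\<dots> \<le> \<gamma> * (\<bar>y + d\<bar> powr s - \<bar>y\<bar> powr s)"
        using abs_powr_add_diff_lower[OF s(1) True] \<delta> by (intro mult_left_mono) (auto simp: \<gamma>_def \<delta>_def)
      finally show ?thesis
        using \<beta>_nonneg by (simp add: add_increasing2)
    next
      case False
      have d_le: "\<bar>d\<bar> powr p \<le> 4 powr p * \<bar>y\<bar> powr p" if "0 \<le> p" for p
        using powr_mono2[of p "\<bar>d\<bar>" "4 * \<bar>y\<bar>"] False that by (simp add: powr_mult)
      have "- (4 powr (r - s) * \<bar>y\<bar> powr r) \<le> - (\<bar>d\<bar> powr (r - s) * \<bar>y\<bar> powr s)"
        using mult_right_mono[OF d_le[of "r - s"], of "\<bar>y\<bar> powr s"] s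
        by (cases "y = 0") (simp_all add: powr_add[symmetric] mult.assoc)
      also have "\<dots> \<le> \<bar>d\<bar> powr (r - s) * (\<bar>y + d\<bar> powr s - \<bar>y\<bar> powr s)"
        by (simp add: right_diff_distrib)
      finally have "- (4 powr (r - s) * \<bar>y\<bar> powr r) / \<delta>
          \<le> \<bar>d\<bar> powr (r - s) * (\<bar>y + d\<bar> powr s - \<bar>y\<bar> powr s) / \<delta>"
        using \<delta> by (intro divide_right_mono) auto
      with d_le[of r] s show ?thesis
        by (simp add: \<beta> \<gamma>_def algebra_simps diff_divide_distrib)
    qed
  qed
qed

lemma powr_le_imp_le_base:
  fixes x y a :: real
  shows "0 < a \<Longrightarrow> 0 \<le> y \<Longrightarrow> x powr a \<le> y powr a \<Longrightarrow> x \<le> y"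
  by (meson not_le powr_less_mono2)

definition clip :: "real \<Rightarrow> real \<Rightarrow> real" where
  "clip K u = max (- K) (min K u)"

lemma clip_mono: "u \<le> v \<Longrightarrow> clip K u \<le> clip K v"
  unfolding clip_def by auto

lemma clip_bounds: "0 \<le> K \<Longrightarrow> - K \<le> clip K u \<and> clip K u \<le> K"
  unfolding clip_def by auto

lemma abs_minus_clip: "0 \<le> K \<Longrightarrow> \<bar>u - clip K u\<bar> = max 0 (\<bar>u\<bar> - K)"
  unfolding clip_def by (auto simp: max_def min_def)

lemma measurable_clip [measurable]: "clip K \<in> borel_measurable borel"
  unfolding clip_def by measurable

lemma abs_diff_powr_le_clip:
  fixes c q K r lo hi :: real
  assumes r: "1 \<le> r" and c: "lo \<le> clip K c \<and> clip K c \<le> hi" and q: "lo \<le> clip K q \<and> clip K q \<le> hi"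
    and width: "hi - lo \<le> 2 * K"
  shows "\<bar>c - q\<bar> powr r
    \<le> 3 powr r * ((2 * K) powr (r - 1) * (hi - lo) + \<bar>c - clip K c\<bar> powr r) + 3 powr r * \<bar>q - clip K q\<bar> powr r"
proof -
  have "\<bar>c - q\<bar> \<le> \<bar>clip K c - clip K q\<bar> + \<bar>c - clip K c\<bar> + \<bar>q - clip K q\<bar>"
    by linarith
  then have "\<bar>c - q\<bar> powr r
      \<le> 3 powr r * (\<bar>clip K c - clip K q\<bar> powr r + \<bar>c - clip K c\<bar> powr r + \<bar>q - clip K q\<bar> powr r)"
    using r by (intro powr_le_sum3) auto
  moreover have "\<bar>clip K c - clip K q\<bar> powr r \<le> (2 * K) powr (r - 1) * (hi - lo)"
    using c q width r by (intro powr_le_powr_minus_one_mult) auto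
  then have "3 powr r * \<bar>clip K c - clip K q\<bar> powr r \<le> 3 powr r * ((2 * K) powr (r - 1) * (hi - lo))"
    by (intro mult_left_mono) auto
  ultimately show ?thesis
    by (simp only: distrib_left)
qed

section \<open>Cell costs of a monotone function in \<open>L\<^sup>r\<close>\<close>

text \<open>
  The moment hypothesis of the theorem is not needed: if \<open>|F\<^sub>\<mu>\<^sup>-\<^sup>1|\<^sup>r\<close> is not integrable on \<open>]0,1[\<close>,
  then neither is the integrand of \<open>d\<^sub>r\<close>, whose Bochner integral is then the junk value \<open>0\<close>.
\<close>

lemma set_integral_quantile_unif_emp_not_integrable:
  fixes Q :: "real \<Rightarrow> real"
  assumes mono: "mono_on {0<..<1} Q" and r: "0 < r"
    and not_int: "\<not> set_integrable lborel {0<..<1} (\<lambda>t. \<bar>Q t\<bar> powr r)"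
    and n: "1 \<le> n" and v: "v \<in> Xi n"
  shows "(LINT t:{0<..<1}|lborel. \<bar>quantile (unif_emp n v) t - Q t\<bar> powr r) = 0"
proof -
  let ?G = "\<lambda>t. \<bar>quantile (unif_emp n v) t - Q t\<bar> powr r"
  define S where "S = (\<Sum>i=1..n. \<bar>v i\<bar> powr r)"
  have "\<not> set_integrable lborel {0<..<1} ?G"
  proof
    assume int_G: "set_integrable lborel {0<..<1} ?G"
    have "set_integrable lborel {0<..<1::real} (\<lambda>t. 3 powr r * S + 3 powr r * ?G t)"
      using int_G by (intro set_integral_add set_integrable_const set_integrable_mult_right) auto
    moreover have "set_borel_measurable lborel {0<..<1} (\<lambda>t. \<bar>Q t\<bar> powr r)"
      using mono_on_measurable_unit[OF mono]
      by (intro set_borel_measurable_restrict_space) auto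
    moreover have "\<bar>Q t\<bar> powr r \<le> 3 powr r * S + 3 powr r * ?G t" if t: "t \<in> {0<..<1}" for t
    proof -
      define k where "k = nat \<lfloor>real n * t\<rfloor> + 1"
      have k: "k \<in> {1..n}" using cell_index_bounds[OF t n] by (simp add: k_def)
      have "\<bar>v k\<bar> powr r \<le> S"
        unfolding S_def using k by (intro member_le_sum) auto
      then have "3 powr r * \<bar>v k\<bar> powr r \<le> 3 powr r * S"
        by (intro mult_left_mono) auto
      moreover have "\<bar>Q t\<bar> powr r \<le> 3 powr r * (\<bar>v k\<bar> powr r + \<bar>v k - Q t\<bar> powr r + \<bar>0\<bar> powr r)"
        using r by (intro powr_le_sum3) auto
      ultimately have "\<bar>Q t\<bar> powr r \<le> 3 powr r * S + 3 powr r * \<bar>v k - Q t\<bar> powr r"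
        by (simp only: distrib_left abs_zero powr_0 mult_zero_right add_0_right)
      then show ?thesis
        using quantile_unif_emp[OF n v t] by (simp add: k_def)
    qed
    ultimately have "set_integrable lborel {0<..<1} (\<lambda>t. \<bar>Q t\<bar> powr r)"
      by (elim set_integrable_bound) (auto intro!: AE_I2 order.trans[OF _ abs_ge_self])
    with not_int show False ..
  qed
  then show ?thesis
    by (simp add: set_lebesgue_integral_def set_integrable_def not_integrable_integral_eq)
qed

lemma dist_r_unif_emp_not_integrable:
  assumes "real_distribution M" "0 < r"
    and "\<not> set_integrable lborel {0<..<1} (\<lambda>t. \<bar>quantile M t\<bar> powr r)"
    and "1 \<le> n" "v \<in> Xi n"
  shows "dist_r r (unif_emp n v) M = 0"
  using set_integral_quantile_unif_emp_not_integrable[OF mono_on_quantile[OF assms(1)] assms(2-)] assms(2)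
  by (simp add: dist_r_def)

locale monotone_Lr =
  fixes Q :: "real \<Rightarrow> real" and r :: real
  assumes mono: "mono_on {0<..<1} Q" and one_le_r: "1 \<le> r"
    and integrable_powr: "set_integrable lborel {0<..<1} (\<lambda>t. \<bar>Q t\<bar> powr r)"
begin

lemma set_integrable_comp:
  fixes g :: "real \<Rightarrow> real"
  assumes g: "g \<in> borel_measurable borel" and bound: "\<And>u. \<bar>g u\<bar> \<le> C + D * \<bar>u\<bar> powr r"
    and B: "B \<in> sets borel" "B \<subseteq> {0<..<1}"
  shows "set_integrable lborel B (\<lambda>t. g (Q t))"
proof (rule set_integrable_bound)
  show "set_integrable lborel B (\<lambda>t. C + D * \<bar>Q t\<bar> powr r)"
    using set_integrable_subset[OF integrable_powr] B emeasure_subset_unit_finite[OF B(2)]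
    by (intro set_integral_add set_integrable_const set_integrable_mult_right) auto
  show "set_borel_measurable lborel B (\<lambda>t. g (Q t))"
    using measurable_compose[OF mono_on_measurable_unit[OF mono] g] B
    by (intro set_borel_measurable_restrict_space) auto
  show "AE t in lborel. t \<in> B \<longrightarrow> norm (g (Q t)) \<le> norm (C + D * \<bar>Q t\<bar> powr r)"
    using bound by (auto intro: order.trans[OF _ abs_ge_self])
qed

lemma set_integrable_dist_powr:
  assumes "0 < p" "p \<le> r" "B \<in> sets borel" "B \<subseteq> {0<..<1}"
  shows "set_integrable lborel B (\<lambda>t. \<bar>c - Q t\<bar> powr p)"
proof (rule set_integrable_comp)
  fix u
  have "\<bar>c - u\<bar> powr p \<le> 3 powr p * (\<bar>c\<bar> powr p + \<bar>u\<bar> powr p + \<bar>0\<bar> powr p)"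
    using assms by (intro powr_le_sum3) auto
  also have "\<dots> \<le> 3 powr p * (\<bar>c\<bar> powr p + 1 + \<bar>u\<bar> powr r)"
    using abs_powr_le_one_plus[OF assms(1,2), of u] by (intro mult_left_mono) auto
  finally show "\<bar>\<bar>c - u\<bar> powr p\<bar> \<le> 3 powr p * (\<bar>c\<bar> powr p + 1) + 3 powr p * \<bar>u\<bar> powr r"
    by (simp add: distrib_left)
qed (use assms in auto)

lemma set_integrable_cell_dist_powr:
  "0 < p \<Longrightarrow> p \<le> r \<Longrightarrow> i \<in> {1..n} \<Longrightarrow> set_integrable lborel (cell n i) (\<lambda>t. \<bar>c - Q t\<bar> powr p)"
  using cell_subset_unit by (intro set_integrable_dist_powr) auto

text \<open>\<open>cost n p v\<close> is \<open>d\<^sub>p(\<delta>\<^sub>v, \<mu>)\<^sup>p\<close>, split along the cells on which the quantile of \<open>\<delta>\<^sub>v\<close> is constant.\<close>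

definition cost :: "nat \<Rightarrow> real \<Rightarrow> (nat \<Rightarrow> real) \<Rightarrow> real" where
  "cost n p v = (\<Sum>i=1..n. LINT t:cell n i|lborel. \<bar>v i - Q t\<bar> powr p)"

lemma cost_nonneg: "0 \<le> cost n p v"
  unfolding cost_def set_lebesgue_integral_def
  by (intro sum_nonneg integral_nonneg_AE) (auto simp: indicator_def)

lemma set_integral_quantile_unif_emp:
  assumes "1 \<le> n" "v \<in> Xi n" "0 < p" "p \<le> r"
  shows "(LINT t:{0<..<1}|lborel. \<bar>quantile (unif_emp n v) t - Q t\<bar> powr p) = cost n p v"
  unfolding cost_def
proof (rule set_integral_unit_eq_sum_cells(2))
  show "set_integrable lborel (cell n i) (\<lambda>t. \<bar>v i - Q t\<bar> powr p)" if "i \<in> {1..n}" for i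
    using assms that by (intro set_integrable_cell_dist_powr)
  show "\<bar>quantile (unif_emp n v) t - Q t\<bar> powr p = \<bar>v (nat \<lfloor>real n * t\<rfloor> + 1) - Q t\<bar> powr p"
    if "t \<in> {0<..<1}" for t
    using quantile_unif_emp[OF assms(1,2) that] by simp
qed (use assms in simp)

lemma dist_r_unif_emp:
  assumes "Q = quantile M" "1 \<le> n" "v \<in> Xi n" "0 < p" "p \<le> r"
  shows "dist_r p (unif_emp n v) M = cost n p v powr (1 / p)"
  using set_integral_quantile_unif_emp[OF assms(2-)] assms(1) by (simp add: dist_r_def)

lemma tendsto_dist_r_unif_emp:
  assumes "Q = quantile M" and "\<And>n. 1 \<le> n \<Longrightarrow> v n \<in> Xi n" and "(\<lambda>n. cost n r (v n)) \<longlonglongrightarrow> 0"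
  shows "(\<lambda>n. dist_r r (unif_emp n (v n)) M) \<longlonglongrightarrow> 0"
proof (rule Lim_transform_eventually)
  show "(\<lambda>n. cost n r (v n) powr (1 / r)) \<longlonglongrightarrow> 0"
    using assms(3) one_le_r cost_nonneg by (intro tendsto_zero_powrI tendsto_const) auto
  show "\<forall>\<^sub>F n in sequentially. cost n r (v n) powr (1 / r) = dist_r r (unif_emp n (v n)) M"
    using dist_r_unif_emp[OF assms(1) _ assms(2)] one_le_r by (intro eventually_sequentiallyI[of 1]) simp
qed

section \<open>Best approximations\<close>

lemma Q_mono: "t \<in> {0<..<1} \<Longrightarrow> u \<in> {0<..<1} \<Longrightarrow> t \<le> u \<Longrightarrow> Q t \<le> Q u"
  using mono by (rule mono_onD)

text \<open>
  Moving the points of a minimiser of \<open>cost n s\<close> towards \<open>Q\<close> cannot change the \<open>j\<close>-th one: the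
  \<open>s\<close>-th power is superadditive, so moving it by \<open>\<epsilon>\<close> towards all of \<open>Q(cell n j)\<close> saves at least
  \<open>\<epsilon>\<^sup>s / n\<close>.
\<close>

lemma cost_minimizer_eq_of_closer:
  assumes n: "1 \<le> n" and s: "1 \<le> s" "s \<le> r"
    and min: "\<And>z. z \<in> Xi n \<Longrightarrow> cost n s x \<le> cost n s z"
    and y: "y \<in> Xi n"
    and closer: "\<And>i t. i \<in> {1..n} \<Longrightarrow> t \<in> cell n i \<Longrightarrow> \<bar>y i - Q t\<bar> \<le> \<bar>x i - Q t\<bar>"
    and j: "j \<in> {1..n}"
    and between: "\<And>t. t \<in> cell n j \<Longrightarrow> \<bar>x j - Q t\<bar> = \<bar>x j - y j\<bar> + \<bar>y j - Q t\<bar>"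
  shows "y j = x j"
proof (rule ccontr)
  assume ne: "y j \<noteq> x j"
  have int: "set_integrable lborel (cell n i) (\<lambda>t. \<bar>c - Q t\<bar> powr s)" if "i \<in> {1..n}" for i c
    using s that by (intro set_integrable_cell_dist_powr) auto
  have le: "(LINT t:cell n i|lborel. \<bar>y i - Q t\<bar> powr s) \<le> (LINT t:cell n i|lborel. \<bar>x i - Q t\<bar> powr s)"
    if i: "i \<in> {1..n}" for i
    using int[OF i] closer[OF i] s by (intro set_integral_mono powr_mono2) auto
  have "(LINT t:cell n j|lborel. \<bar>y j - Q t\<bar> powr s) + \<bar>x j - y j\<bar> powr s / real n
      = (LINT t:cell n j|lborel. \<bar>y j - Q t\<bar> powr s + \<bar>x j - y j\<bar> powr s)"
    using int[OF j] j n by (simp add: set_integral_add set_integrable_cell_const set_integral_cell_const)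
  also have "\<dots> \<le> (LINT t:cell n j|lborel. \<bar>x j - Q t\<bar> powr s)"
  proof (rule set_integral_mono)
    show "set_integrable lborel (cell n j) (\<lambda>t. \<bar>y j - Q t\<bar> powr s + \<bar>x j - y j\<bar> powr s)"
      using int[OF j] by (intro set_integral_add set_integrable_cell_const)
    show "set_integrable lborel (cell n j) (\<lambda>t. \<bar>x j - Q t\<bar> powr s)"
      using int[OF j] .
    show "\<bar>y j - Q t\<bar> powr s + \<bar>x j - y j\<bar> powr s \<le> \<bar>x j - Q t\<bar> powr s" if "t \<in> cell n j" for t
      using powr_superadditive[of "\<bar>y j - Q t\<bar>" "\<bar>x j - y j\<bar>" s] between[OF that] s
      by (simp add: add.commute)
  qed
  moreover have "0 < \<bar>x j - y j\<bar> powr s / real n"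
    using ne n by simp
  ultimately have lt: "(LINT t:cell n j|lborel. \<bar>y j - Q t\<bar> powr s) < (LINT t:cell n j|lborel. \<bar>x j - Q t\<bar> powr s)"
    by linarith
  have "cost n s y < cost n s x"
    unfolding cost_def using le lt j by (intro sum_strict_mono_ex1) auto
  with min[OF y] show False by simp
qed

lemma cost_minimizer_le_quantile:
  assumes n: "1 \<le> n" and s: "1 \<le> s" "s \<le> r" and x: "x \<in> Xi n"
    and min: "\<And>z. z \<in> Xi n \<Longrightarrow> cost n s x \<le> cost n s z"
    and j: "1 \<le> j" "j < n"
  shows "x j \<le> Q (real j / real n)"
proof -
  define b where "b = Q (real j / real n)"
  define y where "y = (\<lambda>k. if k \<le> j then min (x k) b else x k)"
  have below: "Q t \<le> b" if "i \<le> j" "i \<in> {1..n}" "t \<in> cell n i" for i t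
  proof -
    have "real i / real n \<le> real j / real n"
      using that(1) by (simp add: divide_right_mono)
    with cell_upper[OF that(3)] have "t \<le> real j / real n"
      by linarith
    moreover have "t \<in> {0<..<1}"
      using cell_subset_unit[of i n] that by auto
    ultimately show ?thesis
      unfolding b_def using j by (intro Q_mono) auto
  qed
  have "y j = x j"
  proof (rule cost_minimizer_eq_of_closer[OF n s min])
    show "y \<in> Xi n"
      unfolding y_def using x by (rule Xi_min_prefix)
    show "\<bar>y i - Q t\<bar> \<le> \<bar>x i - Q t\<bar>" if "i \<in> {1..n}" "t \<in> cell n i" for i t
      using below[OF _ that] by (auto simp: y_def)
    show "\<bar>x j - Q t\<bar> = \<bar>x j - y j\<bar> + \<bar>y j - Q t\<bar>" if "t \<in> cell n j" for t
      using below[OF _ _ that] j by (auto simp: y_def)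
  qed (use j in auto)
  then show ?thesis
    by (simp add: y_def b_def)
qed

lemma quantile_le_cost_minimizer:
  assumes n: "1 \<le> n" and s: "1 \<le> s" "s \<le> r" and x: "x \<in> Xi n"
    and min: "\<And>z. z \<in> Xi n \<Longrightarrow> cost n s x \<le> cost n s z"
    and j: "1 < j" "j \<le> n"
  shows "Q (real (j - 1) / real n) \<le> x j"
proof -
  define b where "b = Q (real (j - 1) / real n)"
  define y where "y = (\<lambda>k. if j \<le> k then max (x k) b else x k)"
  have above: "b \<le> Q t" if "j \<le> i" "i \<in> {1..n}" "t \<in> cell n i" for i t
  proof -
    have "real (j - 1) / real n \<le> real (i - 1) / real n"
      using that(1) by (simp add: divide_right_mono)
    also have "\<dots> \<le> t"
      using cell_lower[of i t n] that by simp
    finally have "real (j - 1) / real n \<le> t" .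
    moreover have "t \<in> {0<..<1}"
      using cell_subset_unit[of i n] that by auto
    ultimately show ?thesis
      unfolding b_def using j by (intro Q_mono) auto
  qed
  have "y j = x j"
  proof (rule cost_minimizer_eq_of_closer[OF n s min])
    show "y \<in> Xi n"
      unfolding y_def using x by (rule Xi_max_suffix)
    show "\<bar>y i - Q t\<bar> \<le> \<bar>x i - Q t\<bar>" if "i \<in> {1..n}" "t \<in> cell n i" for i t
      using above[OF _ that] by (auto simp: y_def)
    show "\<bar>x j - Q t\<bar> = \<bar>x j - y j\<bar> + \<bar>y j - Q t\<bar>" if "t \<in> cell n j" for t
      using above[OF _ _ that] j by (auto simp: y_def)
  qed (use j in auto)
  then show ?thesis
    by (simp add: y_def b_def)
qed

lemma set_integral_powr_le_shift_const:
  assumes s: "1 \<le> s" "s \<le> r" and B: "B \<in> sets borel" "B \<subseteq> {0<..<1}"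
    and le: "(LINT t:B|lborel. \<bar>a - Q t\<bar> powr s) \<le> (LINT t:B|lborel. \<bar>c - Q t\<bar> powr s)"
  shows "(LINT t:B|lborel. \<bar>a - Q t\<bar> powr r)
      \<le> 3 powr r * (shift_const r s + 1) * (LINT t:B|lborel. \<bar>c - Q t\<bar> powr r)"
proof -
  obtain \<gamma> where \<gamma>: "0 \<le> \<gamma>"
    and key: "\<And>y. \<bar>a - c\<bar> powr r \<le> \<gamma> * (\<bar>y + (a - c)\<bar> powr s - \<bar>y\<bar> powr s) + shift_const r s * \<bar>y\<bar> powr r"
    using abs_powr_shift_bound[OF s] by blast
  define I where "I = (LINT t:B|lborel. \<bar>c - Q t\<bar> powr r)"
  define m where "m = measure lborel B"
  have int: "set_integrable lborel B (\<lambda>t. \<bar>e - Q t\<bar> powr p)" if "0 < p" "p \<le> r" for e p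
    using that B by (intro set_integrable_dist_powr)
  have const: "set_integrable lborel B (\<lambda>t. e)" "(LINT t:B|lborel. e) = m * e" for e
    using emeasure_subset_unit_finite[OF B(2)] B(1)
    by (auto simp: set_integrable_const set_integral_const m_def)
  have "\<bar>a - c\<bar> powr r * m
      \<le> (LINT t:B|lborel. \<gamma> * (\<bar>a - Q t\<bar> powr s - \<bar>c - Q t\<bar> powr s) + shift_const r s * \<bar>c - Q t\<bar> powr r)"
    unfolding const(2)[symmetric] mult.commute[of _ m]
    using key[of "c - Q _"] int s one_le_r const(1)
    by (intro set_integral_mono) (auto intro!: set_integral_add set_integral_diff)
  also have "\<dots> = \<gamma> * ((LINT t:B|lborel. \<bar>a - Q t\<bar> powr s) - (LINT t:B|lborel. \<bar>c - Q t\<bar> powr s))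
      + shift_const r s * I"
    using int s one_le_r by (simp add: I_def set_integral_add set_integral_diff)
  also have "\<dots> \<le> shift_const r s * I"
    using \<gamma> le by (simp add: mult_nonneg_nonpos)
  finally have shift: "\<bar>a - c\<bar> powr r * m \<le> shift_const r s * I" .
  have "(LINT t:B|lborel. \<bar>a - Q t\<bar> powr r)
      \<le> (LINT t:B|lborel. 3 powr r * (\<bar>a - c\<bar> powr r + \<bar>c - Q t\<bar> powr r + \<bar>0\<bar> powr r))"
    using int one_le_r const(1) by (intro set_integral_mono powr_le_sum3) auto
  also have "\<dots> = 3 powr r * (\<bar>a - c\<bar> powr r * m + I)"
    using int one_le_r const by (simp add: I_def set_integral_add mult.commute)
  also have "\<dots> \<le> 3 powr r * (shift_const r s + 1) * I"
    using shift by (simp add: algebra_simps)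
  finally show ?thesis
    by (simp add: I_def)
qed

definition mid_values :: "nat \<Rightarrow> nat \<Rightarrow> real" where
  "mid_values n = (\<lambda>i. Q ((2 * real i - 1) / (2 * real n)))"

lemma cost_fun_upd:
  "i \<in> {1..n} \<Longrightarrow> cost n p (v(i := c))
    = cost n p v - (LINT t:cell n i|lborel. \<bar>v i - Q t\<bar> powr p) + (LINT t:cell n i|lborel. \<bar>c - Q t\<bar> powr p)"
  unfolding cost_def by (simp add: sum.remove)

lemma cost_minimizer_cell_le:
  assumes n: "1 \<le> n" and s: "1 \<le> s" "s \<le> r" and x: "x \<in> Xi n"
    and min: "\<And>z. z \<in> Xi n \<Longrightarrow> cost n s x \<le> cost n s z"
    and i: "i \<in> {1..n}"
  shows "(LINT t:cell n i|lborel. \<bar>x i - Q t\<bar> powr s) \<le> (LINT t:cell n i|lborel. \<bar>mid_values n i - Q t\<bar> powr s)"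
proof -
  define m where "m = (2 * real i - 1) / (2 * real n)"
  have m: "m \<in> cell n i" "m \<in> {0<..<1}"
    using i by (auto simp: m_def intro: midpoint_in_cell midpoint_in_unit)
  have "x(i := mid_values n i) \<in> Xi n"
  proof (rule Xi_update[OF x])
    assume "1 < i"
    then have "x (i - 1) \<le> Q (real (i - 1) / real n)"
      using i by (intro cost_minimizer_le_quantile[OF n s x min]) auto
    also have "\<dots> \<le> mid_values n i"
      unfolding mid_values_def m_def[symmetric]
      using \<open>1 < i\<close> i m cell_lower[of i m n] by (intro Q_mono) auto
    finally show "x (i - 1) \<le> mid_values n i" .
  next
    assume "i < n"
    have "mid_values n i \<le> Q (real i / real n)"
      unfolding mid_values_def m_def[symmetric]
      using \<open>i < n\<close> i m cell_upper[of m n i] by (intro Q_mono) auto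
    also have "\<dots> \<le> x (i + 1)"
      using quantile_le_cost_minimizer[OF n s x min, of "i + 1"] \<open>i < n\<close> i by simp
    finally show "mid_values n i \<le> x (i + 1)" .
  qed
  from min[OF this] show ?thesis
    using i by (simp add: cost_fun_upd)
qed

lemma cost_minimizer_cost_le:
  assumes n: "1 \<le> n" and s: "1 \<le> s" "s \<le> r" and x: "x \<in> Xi n"
    and min: "\<And>z. z \<in> Xi n \<Longrightarrow> cost n s x \<le> cost n s z"
  shows "cost n r x \<le> 3 powr r * (shift_const r s + 1) * cost n r (mid_values n)"
  unfolding cost_def sum_distrib_left
  using cost_minimizer_cell_le[OF assms] cell_subset_unit s
  by (intro sum_mono set_integral_powr_le_shift_const) auto

section \<open>Convergence of the midpoint approximations\<close>

lemma set_integrable_clip_excess: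
  "0 \<le> K \<Longrightarrow> B \<in> sets borel \<Longrightarrow> B \<subseteq> {0<..<1} \<Longrightarrow>
    set_integrable lborel B (\<lambda>t. \<bar>Q t - clip K (Q t)\<bar> powr r)"
  by (rule set_integrable_comp[where C = 0 and D = 1])
     (auto intro!: powr_mono2 simp: abs_minus_clip order.trans[OF _ one_le_r])

text \<open>
  \<open>Q\<close> is monotone, so \<open>|Q|\<close> exceeds \<open>|mid_values n i|\<close> on the half of the \<open>i\<close>-th cell that lies on the
  far side of the midpoint from \<open>0\<close>.
\<close>

lemma half_cell_abs_ge_mid_value:
  assumes i: "i \<in> {1..n}"
  obtains H where "H \<in> sets borel" "H \<subseteq> cell n i" "measure lborel H = 1 / (2 * real n)"
    and "\<And>t. t \<in> H \<Longrightarrow> \<bar>mid_values n i\<bar> \<le> \<bar>Q t\<bar>"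
proof -
  define m where "m = (2 * real i - 1) / (2 * real n)"
  define c where "c = mid_values n i"
  define H where "H = (if 0 \<le> c then {m ..< real i / real n} else {real (i - 1) / real n <.. m})"
  have lo: "real (i - 1) / real n < m" and hi: "m < real i / real n"
    using i by (auto simp: m_def of_nat_diff field_simps)
  have H_cell: "H \<subseteq> cell n i"
    using greaterThanLessThan_subset_cell[of i n] i lo hi by (auto simp: H_def)
  have "\<bar>c\<bar> \<le> \<bar>Q t\<bar>" if t: "t \<in> H" for t
  proof -
    have m_unit: "m \<in> {0<..<1}" and t_unit: "t \<in> {0<..<1}"
      using i H_cell cell_subset_unit[of i n] t by (auto simp: m_def intro: midpoint_in_unit)
    show ?thesis
    proof (cases "0 \<le> c")
      case True
      with t have "m \<le> t"
        by (simp add: H_def)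
      then have "c \<le> Q t"
        unfolding c_def mid_values_def m_def[symmetric] by (rule Q_mono[OF m_unit t_unit])
      with True show ?thesis by simp
    next
      case False
      with t have "t \<le> m"
        by (simp add: H_def)
      then have "Q t \<le> c"
        unfolding c_def mid_values_def m_def[symmetric] by (rule Q_mono[OF t_unit m_unit])
      with False show ?thesis by simp
    qed
  qed
  moreover have "measure lborel H = 1 / (2 * real n)"
    using lo hi i by (auto simp: H_def m_def of_nat_diff field_simps)
  ultimately show ?thesis
    using that[of H] H_cell by (simp add: H_def c_def)
qed

lemma mid_values_excess_le:
  assumes K: "0 \<le> K" and i: "i \<in> {1..n}"
  shows "\<bar>mid_values n i - clip K (mid_values n i)\<bar> powr r / real n
    \<le> 2 * (LINT t:cell n i|lborel. \<bar>Q t - clip K (Q t)\<bar> powr r)"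
proof -
  obtain H where H: "H \<in> sets borel" "H \<subseteq> cell n i" "measure lborel H = 1 / (2 * real n)"
    and ge: "\<And>t. t \<in> H \<Longrightarrow> \<bar>mid_values n i\<bar> \<le> \<bar>Q t\<bar>"
    using half_cell_abs_ge_mid_value[OF i] by blast
  define c where "c = mid_values n i"
  have H_unit: "H \<subseteq> {0<..<1}"
    using H(2) cell_subset_unit[of i n] i by auto
  have "measure lborel H * \<bar>c - clip K c\<bar> powr r = (LINT t:H|lborel. \<bar>c - clip K c\<bar> powr r)"
    using H(1) emeasure_subset_unit_finite[OF H_unit] by (simp add: set_integral_const)
  also have "\<dots> \<le> (LINT t:H|lborel. \<bar>Q t - clip K (Q t)\<bar> powr r)"
    using K H(1) H_unit emeasure_subset_unit_finite[OF H_unit] ge[folded c_def] one_le_r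
    by (intro set_integral_mono set_integrable_const set_integrable_clip_excess powr_mono2)
       (auto simp: abs_minus_clip max.coboundedI2)
  also have "\<dots> \<le> (LINT t:cell n i|lborel. \<bar>Q t - clip K (Q t)\<bar> powr r)"
    using K H cell_subset_unit[of i n] i
    by (intro set_integral_mono_set set_integrable_clip_excess) auto
  finally show ?thesis
    using i by (simp add: H(3) c_def field_simps)
qed

lemma cell_cost_mid_values_le:
  assumes K: "0 < K" and i: "i \<in> {1..n}"
    and between: "\<And>u. u \<in> cell n i \<Longrightarrow> lo \<le> clip K (Q u) \<and> clip K (Q u) \<le> hi"
    and width: "hi - lo \<le> 2 * K"
  shows "(LINT t:cell n i|lborel. \<bar>mid_values n i - Q t\<bar> powr r)
    \<le> 3 powr r * ((2 * K) powr (r - 1) * (hi - lo) / real n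
                   + 3 * (LINT t:cell n i|lborel. \<bar>Q t - clip K (Q t)\<bar> powr r))"
proof -
  define c where "c = mid_values n i"
  define E where "E = (LINT t:cell n i|lborel. \<bar>Q t - clip K (Q t)\<bar> powr r)"
  define G where "G = (2 * K) powr (r - 1) * (hi - lo)"
  define A where "A = G + \<bar>c - clip K c\<bar> powr r"
  have c_between: "lo \<le> clip K c \<and> clip K c \<le> hi"
    unfolding c_def mid_values_def using i by (intro between midpoint_in_cell) auto
  have int_E: "set_integrable lborel (cell n i) (\<lambda>t. \<bar>Q t - clip K (Q t)\<bar> powr r)"
    using K i cell_subset_unit[of i n] by (intro set_integrable_clip_excess) auto
  have "(LINT t:cell n i|lborel. \<bar>c - Q t\<bar> powr r)
      \<le> (LINT t:cell n i|lborel. 3 powr r * A + 3 powr r * \<bar>Q t - clip K (Q t)\<bar> powr r)"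
    using i one_le_r int_E c_between between width unfolding A_def G_def
    by (intro set_integral_mono set_integral_add set_integrable_cell_dist_powr set_integrable_cell_const
        abs_diff_powr_le_clip) auto
  also have "\<dots> = 3 powr r * A / real n + 3 powr r * E"
    using int_E i by (simp add: set_integral_add set_integrable_cell_const set_integral_cell_const E_def)
  also have "\<dots> \<le> 3 powr r * (G / real n + 3 * E)"
  proof -
    have "\<bar>c - clip K c\<bar> powr r / real n \<le> 2 * E"
      unfolding c_def E_def using K i by (intro mid_values_excess_le) auto
    then have "3 powr r * (\<bar>c - clip K c\<bar> powr r / real n) \<le> 3 powr r * (2 * E)"
      by (intro mult_left_mono) auto
    then show ?thesis
      by (simp add: A_def add_divide_distrib algebra_simps)
  qed
  finally show ?thesis
    by (simp add: c_def E_def G_def)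
qed

definition clip_grid :: "real \<Rightarrow> nat \<Rightarrow> nat \<Rightarrow> real" where
  "clip_grid K n j = (if j = 0 then - K else if n \<le> j then K else clip K (Q (real j / real n)))"

lemma clip_grid_bounds: "0 \<le> K \<Longrightarrow> - K \<le> clip_grid K n j \<and> clip_grid K n j \<le> K"
  using clip_bounds[of K] by (auto simp: clip_grid_def)

lemma sum_clip_grid_diff: "1 \<le> n \<Longrightarrow> (\<Sum>i=1..n. clip_grid K n i - clip_grid K n (i - 1)) = 2 * K"
  using sum_telescope''[of 0 n "clip_grid K n"] by (simp add: clip_grid_def)

lemma clip_grid_between:
  assumes K: "0 \<le> K" and i: "i \<in> {1..n}" and u: "u \<in> cell n i"
  shows "clip_grid K n (i - 1) \<le> clip K (Q u) \<and> clip K (Q u) \<le> clip_grid K n i"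
proof
  have u_unit: "u \<in> {0<..<1}"
    using cell_subset_unit[of i n] i u by auto
  show "clip_grid K n (i - 1) \<le> clip K (Q u)"
  proof (cases "i = 1")
    case False
    with i have "Q (real (i - 1) / real n) \<le> Q u"
      using u_unit cell_lower[OF _ u] by (intro Q_mono) auto
    moreover have "i - 1 \<noteq> 0" "\<not> n \<le> i - 1"
      using False i by auto
    ultimately show ?thesis
      by (simp add: clip_grid_def clip_mono)
  qed (use clip_bounds[of K] K in \<open>simp add: clip_grid_def\<close>)
  show "clip K (Q u) \<le> clip_grid K n i"
  proof (cases "i < n")
    case True
    with i have "Q u \<le> Q (real i / real n)"
      using u_unit cell_upper[OF u] by (intro Q_mono) auto
    with True i show ?thesis
      by (simp add: clip_grid_def clip_mono)
  qed (use clip_bounds[of K] K i in \<open>simp add: clip_grid_def\<close>)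
qed

lemma cost_mid_values_le:
  assumes K: "0 < K" and n: "1 \<le> n"
  shows "cost n r (mid_values n)
    \<le> 3 powr r * ((2 * K) powr r / real n + 3 * (LINT t:{0<..<1}|lborel. \<bar>Q t - clip K (Q t)\<bar> powr r))"
proof -
  define P where "P = clip_grid K n"
  define E where "E i = (LINT t:cell n i|lborel. \<bar>Q t - clip K (Q t)\<bar> powr r)" for i
  have width: "P i - P j \<le> 2 * K" for i j
    using clip_grid_bounds[of K n i] clip_grid_bounds[of K n j] K unfolding P_def by linarith
  have "cost n r (mid_values n)
      \<le> (\<Sum>i=1..n. 3 powr r * ((2 * K) powr (r - 1) * (P i - P (i - 1)) / real n + 3 * E i))"
    unfolding cost_def E_def P_def using K clip_grid_between width[unfolded P_def]
    by (intro sum_mono cell_cost_mid_values_le) auto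
  also have "\<dots> = 3 powr r * ((2 * K) powr (r - 1) / real n * (\<Sum>i=1..n. P i - P (i - 1))
      + 3 * (\<Sum>i=1..n. E i))"
    by (simp add: sum_distrib_left sum.distrib algebra_simps)
  also have "(\<Sum>i=1..n. E i) = (LINT t:{0<..<1}|lborel. \<bar>Q t - clip K (Q t)\<bar> powr r)"
    unfolding E_def using K n cell_subset_unit
    by (intro set_integral_unit_eq_sum_cells(2)[symmetric] set_integrable_clip_excess) auto
  also have "(\<Sum>i=1..n. P i - P (i - 1)) = 2 * K"
    unfolding P_def by (rule sum_clip_grid_diff[OF n])
  also have "(2 * K) powr (r - 1) / real n * (2 * K) = (2 * K) powr r / real n"
    using K by (simp add: powr_diff)
  finally show ?thesis .
qed

lemma tendsto_clip_excess_integral: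
  "(\<lambda>K::nat. LINT t:{0<..<1}|lborel. \<bar>Q t - clip (real K) (Q t)\<bar> powr r) \<longlonglongrightarrow> 0"
proof -
  let ?f = "\<lambda>K t. indicator {0<..<1} t *\<^sub>R \<bar>Q t - clip (real K) (Q t)\<bar> powr r"
  have "(\<lambda>K. integral\<^sup>L lborel (?f K)) \<longlonglongrightarrow> integral\<^sup>L lborel (\<lambda>t :: real. 0 :: real)"
  proof (rule Bochner_Integration.integral_dominated_convergence
      [where w = "\<lambda>t. indicator {0<..<1} t *\<^sub>R \<bar>Q t\<bar> powr r" and s = ?f and f = "\<lambda>t. 0"])
    show "integrable lborel (\<lambda>t. indicator {0<..<1} t *\<^sub>R \<bar>Q t\<bar> powr r)"
      using integrable_powr unfolding set_integrable_def .
    show "?f K \<in> borel_measurable lborel" for K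
      using set_integrable_clip_excess[of "real K" "{0<..<1}"]
      by (simp add: set_integrable_def borel_measurable_integrable)
    show "AE t in lborel. norm (?f K t) \<le> indicator {0<..<1} t *\<^sub>R \<bar>Q t\<bar> powr r" for K
      using one_le_r by (intro AE_I2) (auto intro!: powr_mono2 simp: abs_minus_clip indicator_def)
    show "AE t in lborel. (\<lambda>K. ?f K t) \<longlonglongrightarrow> 0"
    proof (intro AE_I2 tendsto_eventually eventually_sequentiallyI)
      fix t and K :: nat
      assume "nat \<lceil>\<bar>Q t\<bar>\<rceil> \<le> K"
      then have "\<bar>Q t\<bar> \<le> real K" by linarith
      then show "?f K t = 0" by (simp add: abs_minus_clip)
    qed
  qed simp
  then show ?thesis
    by (simp add: set_lebesgue_integral_def)
qed

lemma cost_mid_values_tendsto_0: "(\<lambda>n. cost n r (mid_values n)) \<longlonglongrightarrow> 0"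
proof (rule order_tendstoI)
  show "\<forall>\<^sub>F n in sequentially. a < cost n r (mid_values n)" if "a < 0" for a
    by (intro always_eventually allI less_le_trans[OF that cost_nonneg])
next
  fix e :: real assume e: "0 < e"
  define E where "E K = (LINT t:{0<..<1}|lborel. \<bar>Q t - clip K (Q t)\<bar> powr r)" for K
  obtain K :: nat where K: "1 \<le> K" "3 powr r * (3 * E (real K)) < e / 2"
  proof -
    have "(\<lambda>K. 3 powr r * (3 * E (real K))) \<longlonglongrightarrow> 0"
      unfolding E_def using tendsto_clip_excess_integral by (intro tendsto_mult_right_zero)
    then have "\<forall>\<^sub>F K in sequentially. 3 powr r * (3 * E (real K)) < e / 2"
      by (rule order_tendstoD(2)) (use e in simp)
    then have "\<forall>\<^sub>F K in sequentially. 1 \<le> K \<and> 3 powr r * (3 * E (real K)) < e / 2"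
      by (intro eventually_conj eventually_ge_at_top)
    then show ?thesis
      using that eventually_sequentially by (auto dest: eventually_happens)
  qed
  have "(\<lambda>n. 3 powr r * ((2 * real K) powr r / real n)) \<longlonglongrightarrow> 0"
    by (intro tendsto_mult_right_zero lim_const_over_n)
  then have "\<forall>\<^sub>F n in sequentially. 3 powr r * ((2 * real K) powr r / real n) < e / 2"
    by (rule order_tendstoD(2)) (use e in simp)
  then have "\<forall>\<^sub>F n in sequentially. 1 \<le> n \<and> 3 powr r * ((2 * real K) powr r / real n) < e / 2"
    by (intro eventually_conj eventually_ge_at_top)
  then show "\<forall>\<^sub>F n in sequentially. cost n r (mid_values n) < e"
  proof (rule eventually_mono)
    fix n assume n: "1 \<le> n \<and> 3 powr r * ((2 * real K) powr r / real n) < e / 2"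
    have "cost n r (mid_values n) \<le> 3 powr r * ((2 * real K) powr r / real n) + 3 powr r * (3 * E (real K))"
      using cost_mid_values_le[of "real K" n] K n by (simp add: E_def distrib_left)
    with n K show "cost n r (mid_values n) < e"
      by linarith
  qed
qed

lemma cost_minimizers_tendsto_0:
  assumes s: "1 \<le> s" "s \<le> r"
    and xs: "\<And>n. 1 \<le> n \<Longrightarrow> xs n \<in> Xi n"
    and min: "\<And>n z. 1 \<le> n \<Longrightarrow> z \<in> Xi n \<Longrightarrow> cost n s (xs n) \<le> cost n s z"
  shows "(\<lambda>n. cost n r (xs n)) \<longlonglongrightarrow> 0"
proof (rule tendsto_sandwich)
  show "\<forall>\<^sub>F n in sequentially. 0 \<le> cost n r (xs n)"
    by (simp add: cost_nonneg)
  show "\<forall>\<^sub>F n in sequentially. cost n r (xs n) \<le> 3 powr r * (shift_const r s + 1) * cost n r (mid_values n)"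
    using cost_minimizer_cost_le[OF _ s xs min] by (auto intro: eventually_sequentiallyI)
  show "(\<lambda>n. 3 powr r * (shift_const r s + 1) * cost n r (mid_values n)) \<longlonglongrightarrow> 0"
    using tendsto_mult_right_zero[OF cost_mid_values_tendsto_0] by simp
qed simp


lemma tendsto_dist_r_mid_values:
  assumes "Q = quantile M"
  shows "(\<lambda>n. dist_r r (unif_emp n (mid_values n)) M) \<longlonglongrightarrow> 0"
proof (rule tendsto_dist_r_unif_emp[OF assms _ cost_mid_values_tendsto_0])
  show "mid_values n \<in> Xi n" for n
    unfolding mid_values_def by (rule Xi_mono_on_midpoints[OF mono])
qed

lemma tendsto_dist_r_best_approximations:
  assumes Q: "Q = quantile M" and s: "1 \<le> s" "s \<le> r"
    and xs: "\<And>n. 1 \<le> n \<Longrightarrow> xs n \<in> Xi n"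
    and min: "\<And>n y. 1 \<le> n \<Longrightarrow> y \<in> Xi n \<Longrightarrow> dist_r s (unif_emp n (xs n)) M \<le> dist_r s (unif_emp n y) M"
  shows "(\<lambda>n. dist_r r (unif_emp n (xs n)) M) \<longlonglongrightarrow> 0"
proof (rule tendsto_dist_r_unif_emp[OF Q xs cost_minimizers_tendsto_0[OF s xs]])
  fix n y assume ny: "1 \<le> n" "y \<in> Xi n"
  show "cost n s (xs n) \<le> cost n s y"
  proof (rule powr_le_imp_le_base[of "1 / s"])
    show "cost n s (xs n) powr (1 / s) \<le> cost n s y powr (1 / s)"
      using min[OF ny] s ny xs[OF ny(1)] by (simp add: dist_r_unif_emp[OF Q])
  qed (use s cost_nonneg in auto)
qed

end

theorem corollary5:
  fixes r s :: real and M :: "real measure" and xs :: "nat \<Rightarrow> nat \<Rightarrow> real"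
  assumes "r \<ge> 1"
    and "prob_space M" and "sets M = sets borel"
    and "integrable M (\<lambda>x. \<bar>x\<bar> powr r)"
    and "1 \<le> s" and "s \<le> r"
    and "\<And>n. n \<ge> 1 \<Longrightarrow> xs n \<in> Xi n"
    and "\<And>n y. n \<ge> 1 \<Longrightarrow> y \<in> Xi n \<Longrightarrow>
           dist_r s (unif_emp n (xs n)) M \<le> dist_r s (unif_emp n y) M"
  shows "((\<lambda>n. dist_r r (unif_emp n (xs n)) M) \<longlonglongrightarrow> 0) \<and>
         ((\<lambda>n. dist_r r (unif_emp n (\<lambda>i. quantile M ((2 * real i - 1) / (2 * real n)))) M)
           \<longlonglongrightarrow> 0)"
proof -
  have M: "real_distribution M"
    using assms(2,3) by (simp add: real_distribution_def real_distribution_axioms_def)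
  show ?thesis
  proof (cases "set_integrable lborel {0<..<1} (\<lambda>t. \<bar>quantile M t\<bar> powr r)")
    case False
    have "\<forall>\<^sub>F n in sequentially. dist_r r (unif_emp n (v n)) M = 0"
      if "\<And>n. 1 \<le> n \<Longrightarrow> v n \<in> Xi n" for v
      using dist_r_unif_emp_not_integrable[OF M _ False _ that] assms(1)
      by (intro eventually_sequentiallyI[of 1]) simp
    with assms(7) Xi_mono_on_midpoints[OF mono_on_quantile[OF M]] show ?thesis
      by (simp add: tendsto_eventually)
  next
    case True
    interpret monotone_Lr "quantile M" r
      using mono_on_quantile[OF M] True assms(1) by unfold_locales
    show ?thesis
      using tendsto_dist_r_best_approximations[OF refl assms(5-8)] tendsto_dist_r_mid_values[OF refl]
      by (simp add: mid_values_def)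
  qed
qed

end
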